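(* Let $\Re$ be a commutative Krasner hyperring with identity $1\ne0$, $\phi$ a hyperideal reduction and $\delta$ a hyperideal expansion on $L(\Re)$, and $\{M_i:i\in\Delta\}$ a directed family of $\phi$-$\delta$-primary hyperideals of $\Re$. Then $M=\bigcup_{i\in\Delta}M_i$ is a $\phi$-$\delta$-primary hyperideal of $\Re$.
   Context: Krasner hyperring: $(\Re,\oplus)$ canonical hypergroup, $(\Re,\circ)$ commutative semigroup with identity $1\ne0$, $0$ absorbing, distributive; hyperideals and $L(\Re)$ as usual. Reduction: $\phi(N)\subseteq N$, monotone, values in $L(\Re)\cup\{\emptyset\}$; expansion: $N\subseteq\delta(N)$, monotone. Directed family: for all $i,j$ there is $k$ with $M_i\cup M_j\subseteq M_k$. A proper hyperideal $N$ is $\phi$-$\delta$-primary if $a\circ b\in N$, $a\circ b\notin\phi(N)$ imply $a\in N$ or $b\in\delta(N)$. *)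

theory Defs
  imports Main
begin

definition hsum :: "('a \<Rightarrow> 'a \<Rightarrow> 'a set) \<Rightarrow> 'a set \<Rightarrow> 'a set \<Rightarrow> 'a set" where
  "hsum hplus A B = (\<Union>a\<in>A. \<Union>b\<in>B. hplus a b)"

definition canonical_hypergroup ::
  "'a set \<Rightarrow> ('a \<Rightarrow> 'a \<Rightarrow> 'a set) \<Rightarrow> 'a \<Rightarrow> bool" where
  "canonical_hypergroup R hplus hzero \<longleftrightarrow>
     (\<forall>x\<in>R. \<forall>y\<in>R. hplus x y \<subseteq> R \<and> hplus x y \<noteq> {}) \<and>
     (\<forall>x\<in>R. \<forall>y\<in>R. \<forall>z\<in>R. hsum hplus (hplus x y) {z} = hsum hplus {x} (hplus y z)) \<and>
     (\<forall>x\<in>R. \<forall>y\<in>R. hplus x y = hplus y x) \<and>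
     hzero \<in> R \<and> (\<forall>x\<in>R. hplus hzero x = {x}) \<and>
     (\<forall>x\<in>R. \<exists>!y. y \<in> R \<and> hzero \<in> hplus x y) \<and>
     (\<forall>x\<in>R. \<forall>y\<in>R. \<forall>z\<in>R. z \<in> hplus x y \<longrightarrow>
        (\<exists>nx\<in>R. \<exists>ny\<in>R. hzero \<in> hplus x nx \<and> hzero \<in> hplus y ny \<and>
           y \<in> hplus nx z \<and> x \<in> hplus z ny))"

definition hneg :: "'a set \<Rightarrow> ('a \<Rightarrow> 'a \<Rightarrow> 'a set) \<Rightarrow> 'a \<Rightarrow> 'a \<Rightarrow> 'a" where
  "hneg R hplus hzero x = (THE y. y \<in> R \<and> hzero \<in> hplus x y)"

definition krasner_hyperring ::
  "'a set \<Rightarrow> ('a \<Rightarrow> 'a \<Rightarrow> 'a set) \<Rightarrow> ('a \<Rightarrow> 'a \<Rightarrow> 'a) \<Rightarrow> 'a \<Rightarrow> 'a \<Rightarrow> bool" where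
  "krasner_hyperring R hplus hmult hzero hone \<longleftrightarrow>
     canonical_hypergroup R hplus hzero \<and>
     (\<forall>x\<in>R. \<forall>y\<in>R. hmult x y \<in> R) \<and>
     (\<forall>x\<in>R. \<forall>y\<in>R. \<forall>z\<in>R. hmult (hmult x y) z = hmult x (hmult y z)) \<and>
     (\<forall>x\<in>R. \<forall>y\<in>R. hmult x y = hmult y x) \<and>
     hone \<in> R \<and> hone \<noteq> hzero \<and> (\<forall>x\<in>R. hmult hone x = x) \<and>
     (\<forall>x\<in>R. hmult hzero x = hzero) \<and>
     (\<forall>x\<in>R. \<forall>y\<in>R. \<forall>z\<in>R. (hmult z) ` (hplus x y) = hplus (hmult z x) (hmult z y))"

definition hyperideal ::
  "'a set \<Rightarrow> ('a \<Rightarrow> 'a \<Rightarrow> 'a set) \<Rightarrow> ('a \<Rightarrow> 'a \<Rightarrow> 'a) \<Rightarrow> 'a \<Rightarrow> 'a set \<Rightarrow> bool" where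
  "hyperideal R hplus hmult hzero I \<longleftrightarrow>
     I \<subseteq> R \<and> I \<noteq> {} \<and>
     (\<forall>a\<in>I. \<forall>b\<in>I. hplus a (hneg R hplus hzero b) \<subseteq> I) \<and>
     (\<forall>a\<in>I. \<forall>r\<in>R. hmult r a \<in> I)"

definition hyperideals ::
  "'a set \<Rightarrow> ('a \<Rightarrow> 'a \<Rightarrow> 'a set) \<Rightarrow> ('a \<Rightarrow> 'a \<Rightarrow> 'a) \<Rightarrow> 'a \<Rightarrow> 'a set set" where
  "hyperideals R hplus hmult hzero = {I. hyperideal R hplus hmult hzero I}"

definition hyperideal_reduction ::
  "'a set \<Rightarrow> ('a \<Rightarrow> 'a \<Rightarrow> 'a set) \<Rightarrow> ('a \<Rightarrow> 'a \<Rightarrow> 'a) \<Rightarrow> 'a \<Rightarrow> ('a set \<Rightarrow> 'a set) \<Rightarrow> bool" where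
  "hyperideal_reduction R hplus hmult hzero \<phi> \<longleftrightarrow>
     (\<forall>N\<in>hyperideals R hplus hmult hzero. \<phi> N \<subseteq> N \<and>
        \<phi> N \<in> hyperideals R hplus hmult hzero \<union> {{}}) \<and>
     (\<forall>N\<in>hyperideals R hplus hmult hzero. \<forall>K\<in>hyperideals R hplus hmult hzero.
        N \<subseteq> K \<longrightarrow> \<phi> N \<subseteq> \<phi> K)"

definition hyperideal_expansion ::
  "'a set \<Rightarrow> ('a \<Rightarrow> 'a \<Rightarrow> 'a set) \<Rightarrow> ('a \<Rightarrow> 'a \<Rightarrow> 'a) \<Rightarrow> 'a \<Rightarrow> ('a set \<Rightarrow> 'a set) \<Rightarrow> bool" where
  "hyperideal_expansion R hplus hmult hzero \<delta> \<longleftrightarrow>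
     (\<forall>N\<in>hyperideals R hplus hmult hzero. N \<subseteq> \<delta> N) \<and>
     (\<forall>N\<in>hyperideals R hplus hmult hzero. \<forall>K\<in>hyperideals R hplus hmult hzero.
        N \<subseteq> K \<longrightarrow> \<delta> N \<subseteq> \<delta> K)"

definition phi_delta_primary ::
  "'a set \<Rightarrow> ('a \<Rightarrow> 'a \<Rightarrow> 'a set) \<Rightarrow> ('a \<Rightarrow> 'a \<Rightarrow> 'a) \<Rightarrow> 'a \<Rightarrow>
   ('a set \<Rightarrow> 'a set) \<Rightarrow> ('a set \<Rightarrow> 'a set) \<Rightarrow> 'a set \<Rightarrow> bool" where
  "phi_delta_primary R hplus hmult hzero \<phi> \<delta> N \<longleftrightarrow>
     hyperideal R hplus hmult hzero N \<and> N \<noteq> R \<and>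
     (\<forall>a\<in>R. \<forall>b\<in>R. hmult a b \<in> N \<and> hmult a b \<notin> \<phi> N \<longrightarrow> a \<in> N \<or> b \<in> \<delta> N)"

definition directed_family :: "'i set \<Rightarrow> ('i \<Rightarrow> 'a set) \<Rightarrow> bool" where
  "directed_family \<Delta> M \<longleftrightarrow>
     (\<forall>i\<in>\<Delta>. \<forall>j\<in>\<Delta>. \<exists>k\<in>\<Delta>. M i \<union> M j \<subseteq> M k)"

end

theory Submission
  imports Defs
begin

text \<open>Every element of the union lies in some M i, and any two elements lie in a common M k by
directedness; so the hyperideal axioms, each involving at most two elements, are inherited from
that M k. The union is proper because no M i contains 1. Finally, if ab lies in M i but not in
\<phi>(\<Union>M), then by monotonicity of \<phi> it is not in \<phi>(M i) either, so primality of M i gives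
a \<in> M i or b \<in> \<delta>(M i), and monotonicity of \<delta> transports this to the union.\<close>

lemma hyperideal_Union_directed:
  assumes "\<Delta> \<noteq> {}" and "directed_family \<Delta> M"
    and ideals: "\<And>i. i \<in> \<Delta> \<Longrightarrow> hyperideal R hplus hmult hzero (M i)"
  shows "hyperideal R hplus hmult hzero (\<Union>i\<in>\<Delta>. M i)"
  unfolding hyperideal_def
proof (intro conjI ballI)
  show "(\<Union>i\<in>\<Delta>. M i) \<subseteq> R"
    using ideals unfolding hyperideal_def by blast
  obtain i where "i \<in> \<Delta>" using assms(1) by blast
  moreover have "M i \<noteq> {}"
    using ideals[OF \<open>i \<in> \<Delta>\<close>] unfolding hyperideal_def by blast
  ultimately show "(\<Union>i\<in>\<Delta>. M i) \<noteq> {}" by blast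
next
  fix a b assume "a \<in> (\<Union>i\<in>\<Delta>. M i)" "b \<in> (\<Union>i\<in>\<Delta>. M i)"
  then obtain i j where "i \<in> \<Delta>" "j \<in> \<Delta>" "a \<in> M i" "b \<in> M j" by blast
  moreover obtain k where "k \<in> \<Delta>" "M i \<union> M j \<subseteq> M k"
    using assms(2) \<open>i \<in> \<Delta>\<close> \<open>j \<in> \<Delta>\<close> unfolding directed_family_def by blast
  ultimately have "a \<in> M k" "b \<in> M k" by blast+
  then have "hplus a (hneg R hplus hzero b) \<subseteq> M k"
    using ideals[OF \<open>k \<in> \<Delta>\<close>] unfolding hyperideal_def by blast
  then show "hplus a (hneg R hplus hzero b) \<subseteq> (\<Union>i\<in>\<Delta>. M i)"
    using \<open>k \<in> \<Delta>\<close> by blast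
next
  fix a r assume "a \<in> (\<Union>i\<in>\<Delta>. M i)" "r \<in> R"
  then obtain i where "i \<in> \<Delta>" "a \<in> M i" by blast
  then have "hmult r a \<in> M i"
    using ideals[OF \<open>i \<in> \<Delta>\<close>] \<open>r \<in> R\<close> unfolding hyperideal_def by blast
  then show "hmult r a \<in> (\<Union>i\<in>\<Delta>. M i)" using \<open>i \<in> \<Delta>\<close> by blast
qed

lemma hyperideal_eq_carrier_if_one_mem:
  assumes "krasner_hyperring R hplus hmult hzero hone"
    and "hyperideal R hplus hmult hzero I" and "hone \<in> I"
  shows "I = R"
proof
  show "I \<subseteq> R" using assms(2) unfolding hyperideal_def by blast
  show "R \<subseteq> I"
  proof
    fix x assume x: "x \<in> R"
    have "hone \<in> R" using assms(1) unfolding krasner_hyperring_def by (elim conjE)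
    moreover have "hmult x hone = x"
    proof -
      have comm: "\<forall>x\<in>R. \<forall>y\<in>R. hmult x y = hmult y x"
        using assms(1) unfolding krasner_hyperring_def by (elim conjE)
      have unit: "\<forall>x\<in>R. hmult hone x = x"
        using assms(1) unfolding krasner_hyperring_def by (elim conjE)
      show ?thesis using comm unit x \<open>hone \<in> R\<close> by metis
    qed
    moreover have "hmult x hone \<in> I"
      using assms(2,3) x unfolding hyperideal_def by blast
    ultimately show "x \<in> I" by simp
  qed
qed

lemma phi_delta_primary_mono:
  assumes "hyperideal_reduction R hplus hmult hzero \<phi>"
    and "hyperideal_expansion R hplus hmult hzero \<delta>"
    and "phi_delta_primary R hplus hmult hzero \<phi> \<delta> N"
    and "hyperideal R hplus hmult hzero K" and "N \<subseteq> K"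
    and "a \<in> R" "b \<in> R" "hmult a b \<in> N" "hmult a b \<notin> \<phi> K"
  shows "a \<in> K \<or> b \<in> \<delta> K"
proof -
  have N: "N \<in> hyperideals R hplus hmult hzero" and K: "K \<in> hyperideals R hplus hmult hzero"
    using assms(3,4) unfolding phi_delta_primary_def hyperideals_def by auto
  have "\<phi> N \<subseteq> \<phi> K"
    using assms(1) N K \<open>N \<subseteq> K\<close> unfolding hyperideal_reduction_def by blast
  then have "a \<in> N \<or> b \<in> \<delta> N"
    using assms(3,6-9) unfolding phi_delta_primary_def by blast
  moreover have "\<delta> N \<subseteq> \<delta> K"
    using assms(2) N K \<open>N \<subseteq> K\<close> unfolding hyperideal_expansion_def by blast
  ultimately show ?thesis using \<open>N \<subseteq> K\<close> by blast
qed

theorem mainTheorem17: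
  fixes R :: "'a set" and hplus :: "'a \<Rightarrow> 'a \<Rightarrow> 'a set" and hmult :: "'a \<Rightarrow> 'a \<Rightarrow> 'a"
    and hzero hone :: 'a and \<phi> \<delta> :: "'a set \<Rightarrow> 'a set"
    and \<Delta> :: "'i set" and M :: "'i \<Rightarrow> 'a set"
  assumes "krasner_hyperring R hplus hmult hzero hone"
    and "hyperideal_reduction R hplus hmult hzero \<phi>"
    and "hyperideal_expansion R hplus hmult hzero \<delta>"
    and "\<Delta> \<noteq> {}"
    and "directed_family \<Delta> M"
    and "\<forall>i\<in>\<Delta>. phi_delta_primary R hplus hmult hzero \<phi> \<delta> (M i)"
  shows "phi_delta_primary R hplus hmult hzero \<phi> \<delta> (\<Union>i\<in>\<Delta>. M i)"
proof -
  let ?U = "\<Union>i\<in>\<Delta>. M i"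
  have ideals: "hyperideal R hplus hmult hzero (M i)" if "i \<in> \<Delta>" for i
    using assms(6) that unfolding phi_delta_primary_def by blast
  have ideal: "hyperideal R hplus hmult hzero ?U"
    using hyperideal_Union_directed[OF assms(4,5) ideals] .
  have "hone \<notin> M i" if "i \<in> \<Delta>" for i
  proof
    assume "hone \<in> M i"
    then have "M i = R" by (rule hyperideal_eq_carrier_if_one_mem[OF assms(1) ideals[OF that]])
    then show False using assms(6) that unfolding phi_delta_primary_def by blast
  qed
  moreover have "hone \<in> R" using assms(1) unfolding krasner_hyperring_def by (elim conjE)
  ultimately have proper: "?U \<noteq> R" by blast
  have "a \<in> ?U \<or> b \<in> \<delta> ?U"
    if "a \<in> R" "b \<in> R" "hmult a b \<in> ?U" "hmult a b \<notin> \<phi> ?U" for a b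
  proof -
    from that(3) obtain i where i: "i \<in> \<Delta>" "hmult a b \<in> M i" by blast
    have "phi_delta_primary R hplus hmult hzero \<phi> \<delta> (M i)" using assms(6) i(1) by blast
    moreover have "M i \<subseteq> ?U" using i(1) by blast
    ultimately show ?thesis
      using phi_delta_primary_mono[OF assms(2,3) _ ideal] i(2) that(1,2,4) by blast
  qed
  then show ?thesis using ideal proper unfolding phi_delta_primary_def by blast
qed

end
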